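(* Let $\mathbf p$ be a non-degenerate configuration of $n$ points in $\mathbb R^d$ (not necessarily pinned) with affine span of dimension $\ell$, and let $\mathbf p(t)$ be an analytic trajectory with $\mathbf p(0)=\mathbf p$. Then there exist $\varepsilon>0$ and an analytic trajectory of isometries $T(t)$, $t\in[0,\varepsilon)$, such that $\mathbf q(t):=T(t)\mathbf p(t)$ is in $\ell$-pinned position for all $t\in[0,\varepsilon)$.
   Context: A configuration $\mathbf q=(\mathbf q_1,\dots,\mathbf q_n)$, $\mathbf q_i\in\mathbb R^d$, is in $\ell$-pinned position if $\mathbf q_1=0$ and, for $2\le i\le\ell+1$, $\mathbf q_i$ lies in the span of $e_1,\dots,e_{i-1}$. A configuration $\mathbf p$ with $\ell$-dimensional affine span is non-degenerate if $\mathbf p_1,\dots,\mathbf p_{\ell+1}$ are affinely independent. An analytic trajectory of isometries is a family $T(t)\mathbf x=A(t)\mathbf x+\mathbf b(t)$ of isometries of $\mathbb R^d$ with $A(t)$ orthogonal and $A(t),\mathbf b(t)$ analytic in $t$; it acts on configurations pointwise. *)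

theory Defs
  imports "HOL-Analysis.Analysis"
begin

text \<open>Vector-valued (e.g. real^'d or
  matrices real^'d^'d) functions are allowed; this is equivalent to
  componentwise analyticity.\<close>
definition real_analytic_on :: "real set \<Rightarrow> (real \<Rightarrow> 'a::real_normed_vector) \<Rightarrow> bool" where
  "real_analytic_on S f \<longleftrightarrow>
     (\<forall>x\<in>S. \<exists>r>0. \<exists>c::nat \<Rightarrow> 'a.
        \<forall>y\<in>S. \<bar>y - x\<bar> < r \<longrightarrow> (\<lambda>k. ((y - x) ^ k) *\<^sub>R c k) sums f y)"

text \<open>The first k standard coordinates e_1,...,e_k of real^'d, w.r.t. the
  linear order on the (finite) index type 'd.\<close>
definition first_coords :: "nat \<Rightarrow> ('d::{finite,linorder}) set" where
  "first_coords k = {j. card {j'. j' < j} < k}"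

definition pinned :: "nat \<Rightarrow> (nat \<Rightarrow> (real, 'd::{finite,linorder}) vec) \<Rightarrow> bool" where
  "pinned l q \<longleftrightarrow> q 1 = 0 \<and>
     (\<forall>i. 2 \<le> i \<and> i \<le> l + 1 \<longrightarrow> q i \<in> span ((\<lambda>j. axis j 1) ` first_coords (i - 1)))"

definition nondegenerate :: "nat \<Rightarrow> nat \<Rightarrow> (nat \<Rightarrow> real^('d::finite)) \<Rightarrow> bool" where
  "nondegenerate n l p \<longleftrightarrow> aff_dim (p ` {1..n}) = int l \<and>
     inj_on p {1..l+1} \<and> \<not> affine_dependent (p ` {1..l+1})"

end

theory Submission
  imports Defs "HOL-Complex_Analysis.Cauchy_Integral_Formula"
begin

text \<open>Translating by -p_1(t) and rotating by the orthogonal matrix whose rows form an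
  orthonormal frame u_0(t), u_1(t), ... with p_i(t) - p_1(t) in the span of u_0(t), ..., u_{i-2}(t)
  pins the configuration. Such a frame is obtained by Gram-Schmidt applied to the edge vectors
  p_{k+2}(t) - p_1(t), k < l, completed by constant vectors to a basis at t = 0. Gram-Schmidt only
  takes sums, products and 1/sqrt of the squared norms of the residuals; these norms are positive
  at t = 0 by independence, hence on some [0, \<epsilon>), so the frame is analytic there. Real
  analyticity on a half-open interval is handled through local holomorphic extensions, which are
  closed under these operations.\<close>

section \<open>Real-analytic functions\<close>

lemma real_analytic_on_subset:
  "real_analytic_on S f \<Longrightarrow> T \<subseteq> S \<Longrightarrow> real_analytic_on T f"
  unfolding real_analytic_on_def by (meson subsetD)

lemma real_analytic_on_const: "real_analytic_on S (\<lambda>t. c)"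
  unfolding real_analytic_on_def
proof (intro ballI exI conjI impI)
  fix x y :: real
  show "(\<lambda>k. ((y - x) ^ k) *\<^sub>R (if k = 0 then c else 0)) sums c"
    using sums_single[of 0 "\<lambda>_. c"] by (simp add: if_distrib cong: if_cong)
qed (rule zero_less_one)

lemma real_analytic_on_add:
  assumes "real_analytic_on S f" "real_analytic_on S g"
  shows "real_analytic_on S (\<lambda>t. f t + g t)"
  unfolding real_analytic_on_def
proof
  fix x assume "x \<in> S"
  obtain r1 c1 where "r1 > 0"
    and f: "\<forall>y\<in>S. \<bar>y - x\<bar> < r1 \<longrightarrow> (\<lambda>k. ((y - x) ^ k) *\<^sub>R c1 k) sums f y"
    using assms(1) \<open>x \<in> S\<close> unfolding real_analytic_on_def by blast
  obtain r2 c2 where "r2 > 0"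
    and g: "\<forall>y\<in>S. \<bar>y - x\<bar> < r2 \<longrightarrow> (\<lambda>k. ((y - x) ^ k) *\<^sub>R c2 k) sums g y"
    using assms(2) \<open>x \<in> S\<close> unfolding real_analytic_on_def by blast
  have "(\<lambda>k. ((y - x) ^ k) *\<^sub>R (c1 k + c2 k)) sums (f y + g y)"
    if "y \<in> S" "\<bar>y - x\<bar> < min r1 r2" for y
    using sums_add[OF f[rule_format, of y] g[rule_format, of y]] that
    by (simp add: scaleR_add_right)
  then show "\<exists>r>0. \<exists>c. \<forall>y\<in>S. \<bar>y - x\<bar> < r \<longrightarrow> (\<lambda>k. ((y - x) ^ k) *\<^sub>R c k) sums (f y + g y)"
    using \<open>r1 > 0\<close> \<open>r2 > 0\<close>
    by (intro exI[of _ "min r1 r2"] conjI exI[of _ "\<lambda>k. c1 k + c2 k"]) auto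
qed

lemma real_analytic_on_uminus:
  assumes "real_analytic_on S f"
  shows "real_analytic_on S (\<lambda>t. - f t)"
  unfolding real_analytic_on_def
proof
  fix x assume "x \<in> S"
  then obtain r c where "r > 0"
    and f: "\<forall>y\<in>S. \<bar>y - x\<bar> < r \<longrightarrow> (\<lambda>k. ((y - x) ^ k) *\<^sub>R c k) sums f y"
    using assms unfolding real_analytic_on_def by blast
  have "(\<lambda>k. ((y - x) ^ k) *\<^sub>R - c k) sums (- f y)" if "y \<in> S" "\<bar>y - x\<bar> < r" for y
    using sums_minus[OF f[rule_format, of y]] that by simp
  then show "\<exists>r>0. \<exists>c. \<forall>y\<in>S. \<bar>y - x\<bar> < r \<longrightarrow> (\<lambda>k. ((y - x) ^ k) *\<^sub>R c k) sums (- f y)"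
    using \<open>r > 0\<close> by (intro exI[of _ r] conjI exI[of _ "\<lambda>k. - c k"]) auto
qed

lemma real_analytic_on_diff:
  "real_analytic_on S f \<Longrightarrow> real_analytic_on S g \<Longrightarrow> real_analytic_on S (\<lambda>t. f t - g t)"
  using real_analytic_on_add[of S f "\<lambda>t. - g t"] real_analytic_on_uminus[of S g] by simp

lemma real_analytic_on_sum:
  "finite I \<Longrightarrow> (\<And>i. i \<in> I \<Longrightarrow> real_analytic_on S (f i)) \<Longrightarrow>
    real_analytic_on S (\<lambda>t. \<Sum>i\<in>I. f i t)"
proof (induction I rule: finite_induct)
  case empty
  show ?case using real_analytic_on_const[of S 0] by simp
next
  case (insert i I)
  then show ?case by (simp add: real_analytic_on_add)
qed

lemma real_analytic_on_vec_nth: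
  fixes f :: "real \<Rightarrow> 'a::real_normed_vector ^ 'n"
  assumes "real_analytic_on S f"
  shows "real_analytic_on S (\<lambda>t. f t $ j)"
  unfolding real_analytic_on_def
proof
  fix x assume "x \<in> S"
  then obtain r c where "r > 0"
    and f: "\<forall>y\<in>S. \<bar>y - x\<bar> < r \<longrightarrow> (\<lambda>k. ((y - x) ^ k) *\<^sub>R c k) sums f y"
    using assms unfolding real_analytic_on_def by blast
  have "(\<lambda>k. ((y - x) ^ k) *\<^sub>R (c k $ j)) sums (f y $ j)" if "y \<in> S" "\<bar>y - x\<bar> < r" for y
    using sums_vec_nth[OF f[rule_format, OF that], of j] by simp
  then show "\<exists>r>0. \<exists>c. \<forall>y\<in>S. \<bar>y - x\<bar> < r \<longrightarrow> (\<lambda>k. ((y - x) ^ k) *\<^sub>R c k) sums (f y $ j)"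
    using \<open>r > 0\<close> by (intro exI[of _ r] conjI exI[of _ "\<lambda>k. c k $ j"]) auto
qed

lemma real_analytic_on_componentwise:
  fixes f :: "real \<Rightarrow> 'a::real_normed_vector ^ 'n"
  assumes "\<And>j. real_analytic_on S (\<lambda>t. f t $ j)"
  shows "real_analytic_on S f"
  unfolding real_analytic_on_def
proof
  fix x assume "x \<in> S"
  then have ex: "\<forall>j. \<exists>r>0. \<exists>c. \<forall>y\<in>S. \<bar>y - x\<bar> < r \<longrightarrow> (\<lambda>k. ((y - x) ^ k) *\<^sub>R c k) sums (f y $ j)"
    using assms unfolding real_analytic_on_def by blast
  obtain R where "\<forall>j. R j > 0 \<and>
      (\<exists>c. \<forall>y\<in>S. \<bar>y - x\<bar> < R j \<longrightarrow> (\<lambda>k. ((y - x) ^ k) *\<^sub>R c k) sums (f y $ j))"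
    using choice[OF ex] by blast
  then obtain C where R: "\<And>j. R j > 0"
    and C: "\<And>j. \<forall>y\<in>S. \<bar>y - x\<bar> < R j \<longrightarrow> (\<lambda>k. ((y - x) ^ k) *\<^sub>R C j k) sums (f y $ j)"
    using choice[of "\<lambda>j c. \<forall>y\<in>S. \<bar>y - x\<bar> < R j \<longrightarrow> (\<lambda>k. ((y - x) ^ k) *\<^sub>R c k) sums (f y $ j)"]
    by blast
  define r where "r = Min (range R)"
  have "r > 0"
    unfolding r_def using R by (subst Min_gr_iff) auto
  have "(\<lambda>k. ((y - x) ^ k) *\<^sub>R (\<chi> j. C j k)) sums f y" if "y \<in> S" "\<bar>y - x\<bar> < r" for y
    unfolding sums_def
  proof (rule vec_tendstoI)
    fix j
    have "r \<le> R j"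
      unfolding r_def by (rule Min_le) auto
    then have "(\<lambda>k. ((y - x) ^ k) *\<^sub>R C j k) sums (f y $ j)"
      using C that by simp
    then show "((\<lambda>n. (\<Sum>k<n. ((y - x) ^ k) *\<^sub>R (\<chi> j. C j k)) $ j) \<longlongrightarrow> f y $ j) sequentially"
      by (simp add: sums_def)
  qed
  then show "\<exists>r>0. \<exists>c. \<forall>y\<in>S. \<bar>y - x\<bar> < r \<longrightarrow> (\<lambda>k. ((y - x) ^ k) *\<^sub>R c k) sums f y"
    using \<open>r > 0\<close> by (intro exI[of _ r] conjI exI[of _ "\<lambda>k. \<chi> j. C j k"]) auto
qed

lemma real_analytic_on_vec_iff:
  fixes f :: "real \<Rightarrow> 'a::real_normed_vector ^ 'n"
  shows "real_analytic_on S f \<longleftrightarrow> (\<forall>j. real_analytic_on S (\<lambda>t. f t $ j))"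
  using real_analytic_on_vec_nth real_analytic_on_componentwise by blast

section \<open>Local holomorphic extensions\<close>

definition holomorphic_extendable_on :: "real set \<Rightarrow> (real \<Rightarrow> real) \<Rightarrow> bool" where
  "holomorphic_extendable_on S f \<longleftrightarrow>
     (\<forall>x\<in>S. \<exists>r>0. \<exists>g. g holomorphic_on ball (complex_of_real x) r \<and>
        (\<forall>y\<in>S. \<bar>y - x\<bar> < r \<longrightarrow> g (of_real y) = of_real (f y)))"

lemma complex_of_real_in_ball_iff: "complex_of_real y \<in> ball (of_real x) r \<longleftrightarrow> \<bar>y - x\<bar> < r"
  unfolding mem_ball dist_of_real dist_real_def by (simp add: abs_minus_commute)

lemma holomorphic_extendable_imp_real_analytic:
  assumes "holomorphic_extendable_on S f"
  shows "real_analytic_on S f"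
  unfolding real_analytic_on_def
proof
  fix x assume "x \<in> S"
  then obtain r g where "r > 0" and g: "g holomorphic_on ball (complex_of_real x) r"
    and g_eq: "\<forall>y\<in>S. \<bar>y - x\<bar> < r \<longrightarrow> g (of_real y) = of_real (f y)"
    using assms unfolding holomorphic_extendable_on_def by blast
  define c where "c k = Re ((deriv ^^ k) g (of_real x) / fact k)" for k
  have "(\<lambda>k. ((y - x) ^ k) *\<^sub>R c k) sums f y" if "y \<in> S" "\<bar>y - x\<bar> < r" for y
  proof -
    have "complex_of_real y \<in> ball (of_real x) r"
      using complex_of_real_in_ball_iff that(2) by blast
    from sums_Re[OF holomorphic_power_series[OF g this]]
    have "(\<lambda>k. Re ((deriv ^^ k) g (of_real x) / fact k * (of_real y - of_real x) ^ k)) sums f y"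
      using g_eq that by simp
    moreover have "Re ((deriv ^^ k) g (of_real x) / fact k * (of_real y - of_real x) ^ k)
        = ((y - x) ^ k) *\<^sub>R c k" for k
    proof -
      have eq: "(deriv ^^ k) g (of_real x) / fact k * (of_real y - of_real x) ^ k
          = complex_of_real ((y - x) ^ k) * ((deriv ^^ k) g (of_real x) / fact k)"
        by (simp add: mult.commute)
      have Re_of_real_mult: "Re (complex_of_real t * z) = t * Re z" for t z
        by simp
      show ?thesis
        unfolding eq c_def real_scaleR_def by (rule Re_of_real_mult)
    qed
    ultimately show ?thesis
      by simp
  qed
  then show "\<exists>r>0. \<exists>c. \<forall>y\<in>S. \<bar>y - x\<bar> < r \<longrightarrow> (\<lambda>k. ((y - x) ^ k) *\<^sub>R c k) sums f y"
    using \<open>r > 0\<close> by (intro exI[of _ r] conjI exI[of _ c]) auto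
qed

lemma holomorphic_on_real_power_series:
  fixes c :: "nat \<Rightarrow> real" and x s :: real
  assumes "summable (\<lambda>k. c k * s ^ k)"
  defines "g \<equiv> \<lambda>w. \<Sum>k. complex_of_real (c k) * (w - of_real x) ^ k"
  shows "g holomorphic_on ball (of_real x) s"
    and "\<And>w. w \<in> ball (of_real x) s \<Longrightarrow> (\<lambda>k. complex_of_real (c k) * (w - of_real x) ^ k) sums g w"
proof -
  have "summable (\<lambda>k. complex_of_real (c k * s ^ k))"
    using assms(1) by (rule summable_of_real)
  then have summable_s: "summable (\<lambda>k. complex_of_real (c k) * complex_of_real s ^ k)"
    by simp
  show g_sums: "(\<lambda>k. complex_of_real (c k) * (w - of_real x) ^ k) sums g w"
    if "w \<in> ball (of_real x) s" for w
  proof -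
    have "norm (w - of_real x) < norm (complex_of_real s)"
      using that by (simp add: dist_norm norm_minus_commute)
    then have "summable (\<lambda>k. complex_of_real (c k) * (w - of_real x) ^ k)"
      by (rule summable_norm_cancel[OF powser_insidea[OF summable_s]])
    then show ?thesis
      unfolding g_def by (rule summable_sums)
  qed
  then show "g holomorphic_on ball (of_real x) s"
    by (rule power_series_holomorphic)
qed

text \<open>The power series at x converges at some point x + s > x of the interval, hence on the
  complex disc of radius s.\<close>
lemma real_analytic_imp_holomorphic_extendable:
  assumes "real_analytic_on {a..<b} f"
  shows "holomorphic_extendable_on {a..<b} f"
  unfolding holomorphic_extendable_on_def
proof
  fix x assume x: "x \<in> {a..<b}"
  then obtain r and c :: "nat \<Rightarrow> real" where "r > 0"
    and f: "\<forall>y\<in>{a..<b}. \<bar>y - x\<bar> < r \<longrightarrow> (\<lambda>k. ((y - x) ^ k) *\<^sub>R c k) sums f y"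
    using assms unfolding real_analytic_on_def by blast
  define m where "m = min r (b - x)"
  have m: "0 < m" "m \<le> r" "m \<le> b - x"
    using x \<open>r > 0\<close> by (auto simp: m_def)
  define s where "s = m / 2"
  have s: "s > 0" "s < r" "x + s \<in> {a..<b}"
    using x m by (auto simp: s_def)
  have "(\<lambda>k. ((x + s - x) ^ k) *\<^sub>R c k) sums f (x + s)"
    using s by (intro f[rule_format]) auto
  then have "summable (\<lambda>k. c k * s ^ k)"
    by (simp add: sums_summable mult.commute)
  define g where "g w = (\<Sum>k. complex_of_real (c k) * (w - of_real x) ^ k)" for w
  have "g (of_real y) = of_real (f y)" if "y \<in> {a..<b}" "\<bar>y - x\<bar> < s" for y
  proof -
    have "(\<lambda>k. (y - x) ^ k * c k) sums f y"
      using f that s(2) by simp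
    then have "(\<lambda>k. complex_of_real ((y - x) ^ k * c k)) sums of_real (f y)"
      by (rule sums_of_real)
    moreover have "(\<lambda>k. complex_of_real ((y - x) ^ k * c k)) sums g (of_real y)"
      using holomorphic_on_real_power_series(2)[OF \<open>summable _\<close>, of "of_real y" x]
        complex_of_real_in_ball_iff that(2)
      by (simp add: g_def mult.commute)
    ultimately show ?thesis
      using sums_unique2 by blast
  qed
  moreover have "g holomorphic_on ball (of_real x) s"
    unfolding g_def[abs_def] by (rule holomorphic_on_real_power_series(1)[OF \<open>summable _\<close>])
  ultimately show "\<exists>r>0. \<exists>g. g holomorphic_on ball (complex_of_real x) r \<and>
      (\<forall>y\<in>{a..<b}. \<bar>y - x\<bar> < r \<longrightarrow> g (of_real y) = of_real (f y))"
    using s(1) by blast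
qed

lemma holomorphic_extendable_mult:
  assumes "holomorphic_extendable_on S f" "holomorphic_extendable_on S g"
  shows "holomorphic_extendable_on S (\<lambda>t. f t * g t)"
  unfolding holomorphic_extendable_on_def
proof
  fix x assume "x \<in> S"
  obtain r1 F where "r1 > 0" "F holomorphic_on ball (complex_of_real x) r1"
    and F: "\<forall>y\<in>S. \<bar>y - x\<bar> < r1 \<longrightarrow> F (of_real y) = of_real (f y)"
    using assms(1) \<open>x \<in> S\<close> unfolding holomorphic_extendable_on_def by blast
  obtain r2 G where "r2 > 0" "G holomorphic_on ball (complex_of_real x) r2"
    and G: "\<forall>y\<in>S. \<bar>y - x\<bar> < r2 \<longrightarrow> G (of_real y) = of_real (g y)"
    using assms(2) \<open>x \<in> S\<close> unfolding holomorphic_extendable_on_def by blast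
  have "(\<lambda>z. F z * G z) holomorphic_on ball (complex_of_real x) (min r1 r2)"
    using \<open>F holomorphic_on _\<close> \<open>G holomorphic_on _\<close>
    by (intro holomorphic_on_mult) (auto elim: holomorphic_on_subset)
  moreover have "\<forall>y\<in>S. \<bar>y - x\<bar> < min r1 r2 \<longrightarrow> F (of_real y) * G (of_real y) = of_real (f y * g y)"
    using F G by simp
  ultimately show "\<exists>r>0. \<exists>H. H holomorphic_on ball (complex_of_real x) r \<and>
      (\<forall>y\<in>S. \<bar>y - x\<bar> < r \<longrightarrow> H (of_real y) = of_real (f y * g y))"
    using \<open>r1 > 0\<close> \<open>r2 > 0\<close> by (intro exI[of _ "min r1 r2"] conjI exI[of _ "\<lambda>z. F z * G z"]) auto
qed

lemma holomorphic_extendable_imp_continuous_on: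
  assumes "holomorphic_extendable_on S f"
  shows "continuous_on S f"
  unfolding continuous_on_eq_continuous_within
proof
  fix x assume "x \<in> S"
  then obtain r g where "r > 0" and g: "g holomorphic_on ball (complex_of_real x) r"
    and g_eq: "\<forall>y\<in>S. \<bar>y - x\<bar> < r \<longrightarrow> g (of_real y) = of_real (f y)"
    using assms unfolding holomorphic_extendable_on_def by blast
  have "isCont g (of_real x)"
    using holomorphic_on_imp_continuous_on[OF g] by (rule continuous_on_interior) (simp add: \<open>r > 0\<close>)
  then have "isCont (\<lambda>y. Re (g (of_real y))) x"
    by (intro isCont_Re isCont_o2[OF isCont_of_real[OF continuous_ident]])
  then have "continuous (at x within S) (\<lambda>y. Re (g (of_real y)))"
    by (rule continuous_at_imp_continuous_at_within)
  then show "continuous (at x within S) f"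
    by (rule continuous_transform_within[OF _ \<open>r > 0\<close> \<open>x \<in> S\<close>]) (use g_eq in \<open>auto simp: dist_real_def\<close>)
qed

lemma holomorphic_Re_pos_near:
  assumes g: "g holomorphic_on ball z r" and "r > 0" and "Re (g z) > 0"
  obtains s where "0 < s" "s \<le> r" "\<And>w. w \<in> ball z s \<Longrightarrow> Re (g w) > 0"
proof -
  have "isCont g z"
    using holomorphic_on_imp_continuous_on[OF g] by (rule continuous_on_interior) (simp add: \<open>r > 0\<close>)
  then have "continuous (at z) (\<lambda>w. Re (g w))"
    by (rule isCont_Re)
  then obtain d where "d > 0"
    and d: "(\<lambda>w. Re (g w)) ` ball z d \<subseteq> ball (Re (g z)) (Re (g z))"
    using \<open>Re (g z) > 0\<close> continuous_at_ball by meson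
  have pos: "Re (g w) > 0" if "w \<in> ball z (min d r)" for w
  proof -
    have "w \<in> ball z d"
      using that by simp
    then have "Re (g w) \<in> ball (Re (g z)) (Re (g z))"
      using d by blast
    then show ?thesis
      by (simp add: dist_real_def abs_less_iff)
  qed
  show thesis
    by (rule that[of "min d r", OF _ _ pos]) (simp_all add: \<open>d > 0\<close> \<open>r > 0\<close>)
qed

text \<open>Where h > 0 its extension avoids the branch cut of the principal square root.\<close>
lemma holomorphic_extendable_inverse_sqrt:
  assumes h: "holomorphic_extendable_on S h" and pos: "\<And>t. t \<in> S \<Longrightarrow> h t > 0"
  shows "holomorphic_extendable_on S (\<lambda>t. 1 / sqrt (h t))"
  unfolding holomorphic_extendable_on_def
proof
  fix x assume "x \<in> S"
  then obtain r g where "r > 0" and g: "g holomorphic_on ball (complex_of_real x) r"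
    and g_eq: "\<forall>y\<in>S. \<bar>y - x\<bar> < r \<longrightarrow> g (of_real y) = of_real (h y)"
    using h unfolding holomorphic_extendable_on_def by blast
  have "Re (g (of_real x)) > 0"
    using g_eq pos \<open>x \<in> S\<close> \<open>r > 0\<close> by simp
  then obtain s where "0 < s" "s \<le> r" and Re_pos: "\<And>z. z \<in> ball (of_real x) s \<Longrightarrow> Re (g z) > 0"
    using holomorphic_Re_pos_near[OF g \<open>r > 0\<close>] by blast
  have "g holomorphic_on ball (of_real x) s"
    using g by (rule holomorphic_on_subset) (simp add: \<open>s \<le> r\<close> subset_ball)
  moreover have "g z \<notin> \<real>\<^sub>\<le>\<^sub>0" "csqrt (g z) \<noteq> 0" if "z \<in> ball (of_real x) s" for z
    using Re_pos[OF that] by (auto simp: complex_nonpos_Reals_iff)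
  ultimately have "(\<lambda>z. inverse (csqrt (g z))) holomorphic_on ball (of_real x) s"
    by (intro holomorphic_on_inverse holomorphic_on_csqrt')
  moreover have "inverse (csqrt (g (of_real y))) = of_real (1 / sqrt (h y))"
    if "y \<in> S" "\<bar>y - x\<bar> < s" for y
    using g_eq that \<open>s \<le> r\<close> pos[OF that(1)] by (simp add: inverse_eq_divide flip: of_real_sqrt)
  ultimately show "\<exists>r>0. \<exists>G. G holomorphic_on ball (complex_of_real x) r \<and>
      (\<forall>y\<in>S. \<bar>y - x\<bar> < r \<longrightarrow> G (of_real y) = of_real (1 / sqrt (h y)))"
    using \<open>0 < s\<close> by (intro exI[of _ s] conjI exI[of _ "\<lambda>z. inverse (csqrt (g z))"]) auto
qed

lemma real_analytic_on_atLeastLessThan_iff: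
  "real_analytic_on {a..<b} f \<longleftrightarrow> holomorphic_extendable_on {a..<b} f"
  using holomorphic_extendable_imp_real_analytic real_analytic_imp_holomorphic_extendable by blast

lemma real_analytic_on_mult:
  fixes f g :: "real \<Rightarrow> real"
  assumes "real_analytic_on {a..<b} f" "real_analytic_on {a..<b} g"
  shows "real_analytic_on {a..<b} (\<lambda>t. f t * g t)"
  using assms by (simp add: real_analytic_on_atLeastLessThan_iff holomorphic_extendable_mult)

lemma real_analytic_on_inverse_sqrt:
  assumes "real_analytic_on {a..<b} h" "\<And>t. t \<in> {a..<b} \<Longrightarrow> h t > 0"
  shows "real_analytic_on {a..<b} (\<lambda>t. 1 / sqrt (h t))"
  using assms unfolding real_analytic_on_atLeastLessThan_iff
  by (rule holomorphic_extendable_inverse_sqrt)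

lemma real_analytic_on_imp_continuous_on:
  fixes h :: "real \<Rightarrow> real"
  shows "real_analytic_on {a..<b} h \<Longrightarrow> continuous_on {a..<b} h"
  unfolding real_analytic_on_atLeastLessThan_iff by (rule holomorphic_extendable_imp_continuous_on)

lemma real_analytic_on_scaleR:
  fixes c :: "real \<Rightarrow> real" and f :: "real \<Rightarrow> real ^ 'n"
  assumes "real_analytic_on {a..<b} c" "real_analytic_on {a..<b} f"
  shows "real_analytic_on {a..<b} (\<lambda>t. c t *\<^sub>R f t)"
  using assms by (simp add: real_analytic_on_vec_iff real_analytic_on_mult)

lemma real_analytic_on_inner:
  fixes f g :: "real \<Rightarrow> real ^ 'n"
  assumes "real_analytic_on {a..<b} f" "real_analytic_on {a..<b} g"
  shows "real_analytic_on {a..<b} (\<lambda>t. f t \<bullet> g t)"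
  using assms unfolding real_analytic_on_vec_iff inner_vec_def inner_real_def
  by (intro real_analytic_on_sum real_analytic_on_mult) auto

section \<open>Gram-Schmidt along an analytic path\<close>

definition orthonormal_upto :: "nat \<Rightarrow> (nat \<Rightarrow> 'a::real_inner) \<Rightarrow> bool" where
  "orthonormal_upto N u \<longleftrightarrow> (\<forall>i<N. \<forall>j<N. u i \<bullet> u j = (if i = j then 1 else 0))"

lemma orthonormal_upto_Suc:
  "orthonormal_upto (Suc N) u \<longleftrightarrow>
     orthonormal_upto N u \<and> (\<forall>i<N. u N \<bullet> u i = 0) \<and> u N \<bullet> u N = 1"
  unfolding orthonormal_upto_def by (auto simp: less_Suc_eq inner_commute)

lemma span_insert_scaleR:
  assumes "c \<noteq> 0"
  shows "span (insert (c *\<^sub>R x) S) = span (insert x S)"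
proof -
  have "x = inverse c *\<^sub>R (c *\<^sub>R x)"
    using assms by simp
  then have "x \<in> span (insert (c *\<^sub>R x) S)"
    by (metis insertI1 span_base span_mul)
  moreover have "c *\<^sub>R x \<in> span (insert x S)"
    by (simp add: span_base span_mul)
  ultimately show ?thesis
    unfolding span_eq by (auto intro: span_base)
qed

definition orth_residual :: "nat \<Rightarrow> (nat \<Rightarrow> 'a::real_inner) \<Rightarrow> 'a \<Rightarrow> 'a" where
  "orth_residual N u x = x - (\<Sum>i<N. (x \<bullet> u i) *\<^sub>R u i)"

lemma orth_residual_orthogonal:
  assumes "orthonormal_upto N u" "j < N"
  shows "orth_residual N u x \<bullet> u j = 0"
proof -
  have "(\<Sum>i<N. (x \<bullet> u i) * (u i \<bullet> u j)) = (\<Sum>i<N. if i = j then x \<bullet> u j else 0)"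
    using assms by (intro sum.cong) (auto simp: orthonormal_upto_def)
  then show ?thesis
    using assms(2) by (simp add: orth_residual_def inner_diff_left inner_sum_left)
qed

lemma span_insert_orth_residual:
  "span (insert (orth_residual N u x) (u ` {..<N})) = span (insert x (u ` {..<N}))"
proof -
  have "(\<Sum>i<N. (x \<bullet> u i) *\<^sub>R u i) \<in> span (u ` {..<N})"
    by (intro span_sum span_mul span_base) auto
  then show ?thesis
    unfolding orth_residual_def by (intro eq_span_insert_eq) (simp add: span_neg)
qed

lemma orth_residual_nonzero:
  assumes "x \<notin> span (u ` {..<N})"
  shows "orth_residual N u x \<noteq> 0"
proof
  assume "orth_residual N u x = 0"
  then have "x = (\<Sum>i<N. (x \<bullet> u i) *\<^sub>R u i)"
    by (simp add: orth_residual_def)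
  also have "\<dots> \<in> span (u ` {..<N})"
    by (intro span_sum span_mul span_base) auto
  finally show False
    using assms by simp
qed

lemma real_analytic_on_orth_residual:
  fixes u :: "nat \<Rightarrow> real \<Rightarrow> real ^ 'n"
  assumes "\<And>i. i < N \<Longrightarrow> real_analytic_on {a..<b} (u i)" "real_analytic_on {a..<b} f"
  shows "real_analytic_on {a..<b} (\<lambda>t. orth_residual N (\<lambda>i. u i t) (f t))"
  unfolding orth_residual_def using assms
  by (intro real_analytic_on_diff real_analytic_on_sum real_analytic_on_scaleR real_analytic_on_inner) auto

lemma continuous_on_pos_initial_segment:
  fixes h :: "real \<Rightarrow> real"
  assumes "continuous_on {a..<b} h" "a < b" "h a > 0"
  obtains b' where "a < b'" "b' \<le> b" "\<And>t. t \<in> {a..<b'} \<Longrightarrow> h t > 0"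
proof -
  obtain d where "d > 0" and d: "\<And>t. t \<in> {a..<b} \<Longrightarrow> dist t a < d \<Longrightarrow> dist (h t) (h a) < h a"
    using assms unfolding continuous_on_iff by (meson atLeastLessThan_iff order_refl)
  have "h t > 0" if "t \<in> {a..<min b (a + d)}" for t
    using d[of t] that by (auto simp: dist_real_def)
  then show thesis
    using that[of "min b (a + d)"] \<open>a < b\<close> \<open>d > 0\<close> by simp
qed

lemma analytic_gram_schmidt_step:
  fixes u :: "nat \<Rightarrow> real \<Rightarrow> real ^ 'n" and f :: "real \<Rightarrow> real ^ 'n"
  assumes "a < b"
    and u: "\<And>i. i < N \<Longrightarrow> real_analytic_on {a..<b} (u i)"
    and f: "real_analytic_on {a..<b} f"
    and orth: "\<And>t. t \<in> {a..<b} \<Longrightarrow> orthonormal_upto N (\<lambda>i. u i t)"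
    and not_in_span: "f a \<notin> span ((\<lambda>i. u i a) ` {..<N})"
  obtains b' v where "a < b'" "b' \<le> b" "real_analytic_on {a..<b'} v"
    "\<And>t i. t \<in> {a..<b'} \<Longrightarrow> i < N \<Longrightarrow> v t \<bullet> u i t = 0"
    "\<And>t. t \<in> {a..<b'} \<Longrightarrow> v t \<bullet> v t = 1"
    "\<And>t. t \<in> {a..<b'} \<Longrightarrow>
       span (insert (v t) ((\<lambda>i. u i t) ` {..<N})) = span (insert (f t) ((\<lambda>i. u i t) ` {..<N}))"
proof -
  define w where "w t = orth_residual N (\<lambda>i. u i t) (f t)" for t
  define h where "h t = w t \<bullet> w t" for t
  have w_analytic: "real_analytic_on {a..<b} w"
    unfolding w_def using u f by (rule real_analytic_on_orth_residual)
  then have "continuous_on {a..<b} h"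
    unfolding h_def by (intro real_analytic_on_imp_continuous_on real_analytic_on_inner)
  moreover have "h a > 0"
    using orth_residual_nonzero[OF not_in_span] by (simp add: h_def w_def)
  ultimately obtain b' where "a < b'" "b' \<le> b" and h_pos: "\<And>t. t \<in> {a..<b'} \<Longrightarrow> h t > 0"
    using continuous_on_pos_initial_segment \<open>a < b\<close> by blast
  then have sub: "{a..<b'} \<subseteq> {a..<b}"
    by auto
  define v where "v t = (1 / sqrt (h t)) *\<^sub>R w t" for t
  have "real_analytic_on {a..<b'} v"
    unfolding v_def h_def using h_pos[unfolded h_def] real_analytic_on_subset[OF w_analytic sub]
    by (intro real_analytic_on_scaleR real_analytic_on_inverse_sqrt real_analytic_on_inner)
  show thesis
  proof (rule that)
    show "v t \<bullet> u i t = 0" if "t \<in> {a..<b'}" "i < N" for t i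
      using orth_residual_orthogonal[OF orth that(2)] sub that(1) by (auto simp: v_def w_def)
    show "v t \<bullet> v t = 1" if "t \<in> {a..<b'}" for t
    proof -
      have "v t \<bullet> v t = (1 / sqrt (h t))\<^sup>2 * h t"
        by (simp add: v_def h_def power2_eq_square)
      then show ?thesis
        using h_pos[OF that] by (simp add: power_divide)
    qed
    show "span (insert (v t) ((\<lambda>i. u i t) ` {..<N})) = span (insert (f t) ((\<lambda>i. u i t) ` {..<N}))"
      if "t \<in> {a..<b'}" for t
      using h_pos[OF that] by (simp add: v_def w_def span_insert_scaleR span_insert_orth_residual)
  qed fact+
qed

lemma independent_imp_not_in_span_lessThan:
  assumes "inj_on v {..<Suc N}" "independent (v ` {..<Suc N})"
  shows "v N \<notin> span (v ` {..<N})"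
proof
  assume "v N \<in> span (v ` {..<N})"
  moreover have "v ` {..<N} = v ` {..<Suc N} - {v N}"
    using assms(1) by (auto simp: inj_on_def less_Suc_eq)
  ultimately show False
    using assms(2) unfolding dependent_def by auto
qed

lemma gram_schmidt_extend:
  fixes u w f :: "nat \<Rightarrow> 'a::real_inner"
  assumes "orthonormal_upto N u"
    and spans: "\<And>k. k \<le> N \<Longrightarrow> span (u ` {..<k}) = span (f ` {..<k})"
    and "\<And>i. i < N \<Longrightarrow> w i = u i"
    and "\<And>i. i < N \<Longrightarrow> w N \<bullet> u i = 0" "w N \<bullet> w N = 1"
    and "span (insert (w N) (u ` {..<N})) = span (insert (f N) (u ` {..<N}))"
  shows "orthonormal_upto (Suc N) w"
    and "\<And>k. k \<le> Suc N \<Longrightarrow> span (w ` {..<k}) = span (f ` {..<k})"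
proof -
  have "orthonormal_upto N w"
    using assms(1,3) by (simp add: orthonormal_upto_def)
  then show "orthonormal_upto (Suc N) w"
    using assms(3-5) by (simp add: orthonormal_upto_Suc)
  have lower: "w ` {..<k} = u ` {..<k}" if "k \<le> N" for k
    using that assms(3) by (intro image_cong) auto
  show "span (w ` {..<k}) = span (f ` {..<k})" if "k \<le> Suc N" for k
  proof (cases "k \<le> N")
    case True
    then show ?thesis
      using lower spans by simp
  next
    case False
    then have "k = Suc N"
      using that by simp
    moreover have "w ` {..<Suc N} = insert (w N) (u ` {..<N})"
      using lower[of N] by (simp add: lessThan_Suc)
    ultimately show ?thesis
      using assms(6) spans[of N] by (simp add: lessThan_Suc span_insert)
  qed
qed

lemma analytic_gram_schmidt:
  fixes f :: "nat \<Rightarrow> real \<Rightarrow> real ^ 'n"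
  assumes "a < b"
    and "\<And>k. k < N \<Longrightarrow> real_analytic_on {a..<b} (f k)"
    and "inj_on (\<lambda>k. f k a) {..<N}" "independent ((\<lambda>k. f k a) ` {..<N})"
  shows "\<exists>b'>a. b' \<le> b \<and> (\<exists>u. (\<forall>k<N. real_analytic_on {a..<b'} (u k)) \<and>
           (\<forall>t\<in>{a..<b'}. orthonormal_upto N (\<lambda>k. u k t) \<and>
              (\<forall>k\<le>N. span ((\<lambda>i. u i t) ` {..<k}) = span ((\<lambda>i. f i t) ` {..<k}))))"
  using assms(2-)
proof (induction N)
  case 0
  show ?case
    using \<open>a < b\<close> by (auto simp: orthonormal_upto_def)
next
  case (Suc N)
  have "inj_on (\<lambda>k. f k a) {..<N}"
    using Suc.prems(2) by (rule inj_on_subset) auto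
  moreover have "independent ((\<lambda>k. f k a) ` {..<N})"
    using Suc.prems(3) by (rule independent_mono) auto
  ultimately obtain b1 u where "a < b1" "b1 \<le> b"
    and u: "\<And>k. k < N \<Longrightarrow> real_analytic_on {a..<b1} (u k)"
    and orth: "\<And>t. t \<in> {a..<b1} \<Longrightarrow> orthonormal_upto N (\<lambda>k. u k t)"
    and spans: "\<And>t k. t \<in> {a..<b1} \<Longrightarrow> k \<le> N \<Longrightarrow>
                  span ((\<lambda>i. u i t) ` {..<k}) = span ((\<lambda>i. f i t) ` {..<k})"
    using Suc.IH Suc.prems(1) by (metis less_SucI)
  have "f N a \<notin> span ((\<lambda>i. f i a) ` {..<N})"
    using independent_imp_not_in_span_lessThan[OF Suc.prems(2,3)] .
  then have "f N a \<notin> span ((\<lambda>i. u i a) ` {..<N})"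
    using spans[of a N] \<open>a < b1\<close> by simp
  moreover have "real_analytic_on {a..<b1} (f N)"
    using Suc.prems(1)[of N] \<open>b1 \<le> b\<close> by (auto intro: real_analytic_on_subset)
  ultimately obtain b' v where "a < b'" "b' \<le> b1" "real_analytic_on {a..<b'} v"
    and v: "\<And>t i. t \<in> {a..<b'} \<Longrightarrow> i < N \<Longrightarrow> v t \<bullet> u i t = 0"
      "\<And>t. t \<in> {a..<b'} \<Longrightarrow> v t \<bullet> v t = 1"
      "\<And>t. t \<in> {a..<b'} \<Longrightarrow>
         span (insert (v t) ((\<lambda>i. u i t) ` {..<N})) = span (insert (f N t) ((\<lambda>i. u i t) ` {..<N}))"
    using analytic_gram_schmidt_step[OF \<open>a < b1\<close> u _ orth] by blast
  define u' where "u' = u(N := v)"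
  have "real_analytic_on {a..<b'} (u' k)" if "k < Suc N" for k
    using that u[of k] \<open>b' \<le> b1\<close> \<open>real_analytic_on {a..<b'} v\<close>
    by (auto simp: u'_def less_Suc_eq intro: real_analytic_on_subset)
  moreover have "orthonormal_upto (Suc N) (\<lambda>k. u' k t) \<and>
      (\<forall>k\<le>Suc N. span ((\<lambda>i. u' i t) ` {..<k}) = span ((\<lambda>i. f i t) ` {..<k}))"
    if "t \<in> {a..<b'}" for t
  proof -
    have t1: "t \<in> {a..<b1}"
      using that \<open>b' \<le> b1\<close> by auto
    show ?thesis
      using gram_schmidt_extend[OF orth[OF t1] spans[OF t1], where w="\<lambda>k. u' k t"] v[OF that]
      by (simp add: u'_def)
  qed
  ultimately show ?case
    using \<open>a < b'\<close> \<open>b' \<le> b1\<close> \<open>b1 \<le> b\<close> by (intro exI[of _ b'] conjI exI[of _ u']) auto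
qed

section \<open>Pinning\<close>

definition coord_index :: "'d::{finite,linorder} \<Rightarrow> nat" where
  "coord_index j = card {j'. j' < j}"

lemma coord_index_less [simp]: "coord_index (j :: 'd::{finite,linorder}) < CARD('d)"
  unfolding coord_index_def by (rule psubset_card_mono) auto

lemma strict_mono_coord_index: "strict_mono (coord_index :: 'd::{finite,linorder} \<Rightarrow> nat)"
  unfolding strict_mono_def coord_index_def by (auto intro!: psubset_card_mono)

lemma mem_first_coords_iff: "j \<in> first_coords k \<longleftrightarrow> coord_index j < k"
  by (simp add: first_coords_def coord_index_def)

text \<open>Row \<open>j\<close> is \<open>u (coord_index j)\<close>: the frame vector \<open>u k\<close> becomes the coordinate \<open>k + 1\<close> in
  the order used by \<^const>\<open>first_coords\<close>.\<close>
definition frame_matrix :: "(nat \<Rightarrow> (real, 'd::{finite,linorder}) vec) \<Rightarrow> ((real, 'd) vec, 'd) vec" where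
  "frame_matrix u = (\<chi> j. u (coord_index j))"

lemma frame_matrix_mult_nth: "(frame_matrix u *v x) $ j = u (coord_index j) \<bullet> x"
  by (simp add: frame_matrix_def matrix_mult_dot)

lemma orthogonal_matrix_frame_matrix:
  assumes "orthonormal_upto CARD('d) u"
  shows "orthogonal_matrix (frame_matrix (u :: nat \<Rightarrow> (real, 'd::{finite,linorder}) vec))"
  unfolding orthogonal_matrix_orthonormal_rows
  using assms strict_mono_eq[OF strict_mono_coord_index]
  by (auto simp: orthonormal_upto_def frame_matrix_def row_def norm_eq_1 orthogonal_def vec_lambda_eta)

lemma in_span_axis:
  fixes x :: "real ^ 'd"
  assumes "\<And>j. j \<notin> T \<Longrightarrow> x $ j = 0"
  shows "x \<in> span ((\<lambda>j. axis j 1) ` T)"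
proof -
  have "x = (\<Sum>j\<in>UNIV. x $ j *\<^sub>R axis j 1)"
    using basis_expansion[of x] by (simp add: scalar_mult_eq_scaleR)
  also have "\<dots> = (\<Sum>j\<in>T. x $ j *\<^sub>R axis j 1)"
    using assms by (intro sum.mono_neutral_right) auto
  also have "\<dots> \<in> span ((\<lambda>j. axis j 1) ` T)"
    by (intro span_sum span_mul span_base imageI)
  finally show ?thesis .
qed

lemma pinned_frame_matrix:
  fixes u q :: "nat \<Rightarrow> (real, 'd::{finite,linorder}) vec"
  assumes orth: "orthonormal_upto CARD('d) u"
    and span: "\<And>i. 2 \<le> i \<Longrightarrow> i \<le> l + 1 \<Longrightarrow> q i - q 1 \<in> span (u ` {..<i - 1})"
  shows "pinned l (\<lambda>i. frame_matrix u *v (q i - q 1))"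
  unfolding pinned_def
proof (intro conjI allI impI)
  show "frame_matrix u *v (q 1 - q 1) = 0"
    by simp
  fix i assume i: "2 \<le> i \<and> i \<le> l + 1"
  show "frame_matrix u *v (q i - q 1) \<in> span ((\<lambda>j. axis j 1) ` first_coords (i - 1))"
  proof (rule in_span_axis)
    fix j :: 'd assume "j \<notin> first_coords (i - 1)"
    then have "i - 1 \<le> coord_index j"
      by (simp add: mem_first_coords_iff)
    have "orthogonal (u (coord_index j)) (u k)" if "k < i - 1" for k
    proof -
      have "k < CARD('d)" "k \<noteq> coord_index j"
        using that \<open>i - 1 \<le> coord_index j\<close> coord_index_less[of j] by linarith+
      then show ?thesis
        using orth by (simp add: orthonormal_upto_def orthogonal_def)
    qed
    then have "orthogonal (u (coord_index j)) (q i - q 1)"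
      using orthogonal_to_span span i by blast
    then show "(frame_matrix u *v (q i - q 1)) $ j = 0"
      by (simp add: frame_matrix_mult_nth orthogonal_def)
  qed
qed

lemma analytic_pinning_isometry:
  fixes P :: "real \<Rightarrow> nat \<Rightarrow> (real, 'd::{finite,linorder}) vec" and u :: "nat \<Rightarrow> real \<Rightarrow> (real, 'd) vec"
  assumes "\<And>k. k < CARD('d) \<Longrightarrow> real_analytic_on {a..<c} (u k)"
    and "real_analytic_on {a..<c} (\<lambda>t. P t 1)"
    and "\<And>t. t \<in> {a..<c} \<Longrightarrow> orthonormal_upto CARD('d) (\<lambda>k. u k t)"
    and "\<And>t i. t \<in> {a..<c} \<Longrightarrow> 2 \<le> i \<Longrightarrow> i \<le> l + 1 \<Longrightarrow>
           P t i - P t 1 \<in> span ((\<lambda>k. u k t) ` {..<i - 1})"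
  shows "\<exists>A b. real_analytic_on {a..<c} A \<and> real_analytic_on {a..<c} b \<and>
           (\<forall>t\<in>{a..<c}. orthogonal_matrix (A t) \<and> pinned l (\<lambda>i. A t *v P t i + b t))"
proof (intro exI conjI ballI)
  define A where "A t = frame_matrix (\<lambda>k. u k t)" for t
  show "real_analytic_on {a..<c} A"
    by (subst real_analytic_on_vec_iff) (simp add: A_def frame_matrix_def assms(1))
  have b_nth: "(\<lambda>t. (- (A t *v P t 1)) $ j) = (\<lambda>t. - (u (coord_index j) t \<bullet> P t 1))" for j
    by (simp add: A_def frame_matrix_mult_nth)
  show "real_analytic_on {a..<c} (\<lambda>t. - (A t *v P t 1))"
    unfolding real_analytic_on_vec_iff b_nth
    by (intro allI real_analytic_on_uminus real_analytic_on_inner assms(1,2) coord_index_less)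
  fix t assume t: "t \<in> {a..<c}"
  show "orthogonal_matrix (A t)"
    unfolding A_def using assms(3)[OF t] by (rule orthogonal_matrix_frame_matrix)
  have "pinned l (\<lambda>i. A t *v (P t i - P t 1))"
    unfolding A_def using assms(3,4) t by (intro pinned_frame_matrix) auto
  then show "pinned l (\<lambda>i. A t *v P t i + - (A t *v P t 1))"
    by (simp add: matrix_vector_mult_diff_distrib)
qed

lemma extend_to_basis_seq:
  fixes v :: "nat \<Rightarrow> 'a::euclidean_space"
  assumes "inj_on v {..<l}" "independent (v ` {..<l})"
  obtains w where "l \<le> DIM('a)" "\<And>k. k < l \<Longrightarrow> w k = v k"
    "inj_on w {..<DIM('a)}" "independent (w ` {..<DIM('a)})"
proof -
  define B where "B = extend_basis (v ` {..<l})"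
  have "v ` {..<l} \<subseteq> B" "independent B" "span B = UNIV"
    using assms(2) by (simp_all add: B_def extend_basis_superset independent_extend_basis span_extend_basis)
  then have card_B: "card B = DIM('a)"
    using dim_span_eq_card_independent[of B] by simp
  then have "finite B"
    by (intro card_ge_0_finite) simp
  define C where "C = B - v ` {..<l}"
  have card_C: "card C = DIM('a) - l" and "l \<le> DIM('a)"
    using card_Diff_subset[of "v ` {..<l}" B] card_mono[of B "v ` {..<l}"]
      \<open>v ` {..<l} \<subseteq> B\<close> \<open>finite B\<close> card_B card_image[OF assms(1)]
    by (auto simp: C_def finite_subset)
  obtain g where g: "bij_betw g {0..<card C} C"
    using ex_bij_betw_nat_finite \<open>finite B\<close> by (metis C_def finite_Diff)
  define w where "w k = (if k < l then v k else g (k - l))" for k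
  have "w ` {l..<DIM('a)} = g ` ((\<lambda>k. k - l) ` {l..<DIM('a)})"
    by (auto simp: w_def image_image intro!: image_cong)
  also have "(\<lambda>k. k - l) ` {l..<DIM('a)} = {0..<card C}"
    using card_C \<open>l \<le> DIM('a)\<close> by (simp add: image_minus_const_atLeastLessThan_nat)
  finally have "w ` {l..<DIM('a)} = C"
    using g by (simp add: bij_betw_def)
  moreover have "w ` {..<l} = v ` {..<l}"
    by (simp add: w_def)
  moreover have "{..<DIM('a)} = {..<l} \<union> {l..<DIM('a)}"
    using \<open>l \<le> DIM('a)\<close> by auto
  ultimately have "w ` {..<DIM('a)} = B"
    using \<open>v ` {..<l} \<subseteq> B\<close> by (simp add: image_Un C_def Un_absorb1)
  then have "inj_on w {..<DIM('a)}"
    by (intro eq_card_imp_inj_on) (simp_all add: card_B)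
  show thesis
  proof (rule that)
    show "w k = v k" if "k < l" for k
      using that by (simp add: w_def)
    show "independent (w ` {..<DIM('a)})"
      using \<open>w ` {..<DIM('a)} = B\<close> \<open>independent B\<close> by simp
  qed fact+
qed

lemma nondegenerate_imp_le:
  assumes "nondegenerate n l p"
  shows "l + 1 \<le> n"
proof (rule ccontr)
  assume "\<not> l + 1 \<le> n"
  then have "card (p ` {1..n}) \<le> l"
    using card_image_le[of "{1..n}" p] by simp
  moreover have "aff_dim (p ` {1..n}) \<le> int (card (p ` {1..n})) - 1"
    by (rule aff_dim_le_card) simp
  ultimately show False
    using assms by (simp add: nondegenerate_def)
qed

lemma affinely_independent_differences:
  fixes p :: "nat \<Rightarrow> 'a::euclidean_space"
  assumes inj: "inj_on p {1..l + 1}" and indep: "\<not> affine_dependent (p ` {1..l + 1})"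
  shows "inj_on (\<lambda>k. p (k + 2) - p 1) {..<l}" "independent ((\<lambda>k. p (k + 2) - p 1) ` {..<l})"
proof -
  show "inj_on (\<lambda>k. p (k + 2) - p 1) {..<l}"
  proof (rule inj_onI)
    fix x y assume "x \<in> {..<l}" "y \<in> {..<l}" "p (x + 2) - p 1 = p (y + 2) - p 1"
    then have "x + 2 = y + 2"
      using inj by (intro inj_onD[OF inj]) auto
    then show "x = y"
      by simp
  qed
  have notin: "p 1 \<notin> p ` {2..l + 1}"
  proof
    assume "p 1 \<in> p ` {2..l + 1}"
    then obtain i where i: "i \<in> {2..l + 1}" "p 1 = p i"
      by auto
    then have "1 = i"
      by (intro inj_onD[OF inj]) auto
    with i show False
      by simp
  qed
  have "{1..l + 1} = insert 1 {2..l + 1}"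
    by auto
  then have "\<not> affine_dependent (insert (p 1) (p ` {2..l + 1}))"
    using indep by simp
  then have "\<not> dependent ((\<lambda>x. - p 1 + x) ` p ` {2..l + 1})"
    using affine_dependent_iff_dependent[OF notin] by blast
  moreover have "{2..l + 1} = (\<lambda>k. k + 2) ` {..<l}"
    using image_add_atLeastLessThan'[of 2 0 l] by (auto simp: lessThan_atLeast0)
  then have "(\<lambda>x. - p 1 + x) ` p ` {2..l + 1} = (\<lambda>k. p (k + 2) - p 1) ` {..<l}"
    by (simp add: image_image)
  ultimately show "independent ((\<lambda>k. p (k + 2) - p 1) ` {..<l})"
    by simp
qed

lemma analytic_frame_extending_edges:
  fixes P :: "real \<Rightarrow> nat \<Rightarrow> (real, 'd::finite) vec"
  assumes "nondegenerate n l p"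
    and "\<forall>i\<in>{1..n}. real_analytic_on {0..<\<epsilon>0} (\<lambda>t. P t i)"
    and "\<forall>i\<in>{1..n}. P 0 i = p i"
  obtains F where "l \<le> CARD('d)" "\<And>k. real_analytic_on {0..<\<epsilon>0} (F k)"
    "inj_on (\<lambda>k. F k 0) {..<CARD('d)}" "independent ((\<lambda>k. F k 0) ` {..<CARD('d)})"
    "\<And>t i. 2 \<le> i \<Longrightarrow> i \<le> l + 1 \<Longrightarrow> F (i - 2) t = P t i - P t 1"
proof -
  have "l + 1 \<le> n"
    using assms(1) by (rule nondegenerate_imp_le)
  then have P_analytic: "\<And>i. 1 \<le> i \<Longrightarrow> i \<le> l + 1 \<Longrightarrow> real_analytic_on {0..<\<epsilon>0} (\<lambda>t. P t i)"
    and P_0: "\<And>i. 1 \<le> i \<Longrightarrow> i \<le> l + 1 \<Longrightarrow> P 0 i = p i"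
    using assms(2,3) by auto
  have inj: "inj_on p {1..l + 1}" and indep: "\<not> affine_dependent (p ` {1..l + 1})"
    using assms(1) by (simp_all add: nondegenerate_def)
  have "DIM((real, 'd) vec) = CARD('d)"
    by simp
  then obtain w :: "nat \<Rightarrow> (real, 'd) vec" where "l \<le> CARD('d)"
    and w: "\<And>k. k < l \<Longrightarrow> w k = p (k + 2) - p 1"
    and "inj_on w {..<CARD('d)}" "independent (w ` {..<CARD('d)})"
    using extend_to_basis_seq[OF affinely_independent_differences[OF inj indep]] by metis
  define F where "F = (\<lambda>k t. if k < l then P t (k + 2) - P t 1 else w k)"
  have F_analytic: "real_analytic_on {0..<\<epsilon>0} (F k)" for k
    using P_analytic[of 1] P_analytic[of "k + 2"]
    by (cases "k < l") (simp_all add: F_def real_analytic_on_diff real_analytic_on_const)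
  have "F k 0 = w k" if "k < CARD('d)" for k
    using w P_0[of 1] P_0[of "k + 2"] by (simp add: F_def)
  then have image_F: "(\<lambda>k. F k 0) ` {..<CARD('d)} = w ` {..<CARD('d)}"
    and inj_F: "inj_on (\<lambda>k. F k 0) {..<CARD('d)}"
    using \<open>inj_on w {..<CARD('d)}\<close> by (auto simp: inj_on_def intro!: image_cong)
  have edges: "F (i - 2) t = P t i - P t 1" if "2 \<le> i" "i \<le> l + 1" for t i
  proof -
    have "i - 2 < l" "i - 2 + 2 = i"
      using that by linarith+
    then show ?thesis
      by (simp add: F_def)
  qed
  show thesis
  proof (rule that[of F])
    show "independent ((\<lambda>k. F k 0) ` {..<CARD('d)})"
      using image_F \<open>independent (w ` {..<CARD('d)})\<close> by simp
  qed (fact F_analytic inj_F edges \<open>l \<le> CARD('d)\<close>)+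
qed

theorem lemmaA5:
  fixes n l :: nat and p :: "nat \<Rightarrow> (real, 'd::{finite,linorder}) vec"
    and P :: "real \<Rightarrow> nat \<Rightarrow> (real, 'd) vec" and \<epsilon>0 :: real
  assumes "nondegenerate n l p"
    and "\<epsilon>0 > 0"
    and "\<forall>i\<in>{1..n}. real_analytic_on {0..<\<epsilon>0} (\<lambda>t. P t i)"
    and "\<forall>i\<in>{1..n}. P 0 i = p i"
  shows "\<exists>\<epsilon>>0. \<exists>(A :: real \<Rightarrow> ((real, 'd) vec, 'd) vec) (b :: real \<Rightarrow> (real, 'd) vec).
           real_analytic_on {0..<\<epsilon>} A \<and> real_analytic_on {0..<\<epsilon>} b \<and>
           (\<forall>t\<in>{0..<\<epsilon>}. orthogonal_matrix (A t) \<and>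
              pinned l (\<lambda>i. A t *v P t i + b t))"
proof -
  obtain F where "l \<le> CARD('d)" and F_analytic: "\<And>k. real_analytic_on {0..<\<epsilon>0} (F k)"
    and inj_F: "inj_on (\<lambda>k. F k 0) {..<CARD('d)}"
    and indep_F: "independent ((\<lambda>k. F k 0) ` {..<CARD('d)})"
    and edges: "\<And>t i. 2 \<le> i \<Longrightarrow> i \<le> l + 1 \<Longrightarrow> F (i - 2) t = P t i - P t 1"
    using analytic_frame_extending_edges[OF assms(1,3,4)] by blast
  from analytic_gram_schmidt[OF assms(2) F_analytic inj_F indep_F]
  obtain e u where "0 < e" "e \<le> \<epsilon>0"
    and u: "\<And>k. k < CARD('d) \<Longrightarrow> real_analytic_on {0..<e} (u k)"
    and orth: "\<And>t. t \<in> {0..<e} \<Longrightarrow> orthonormal_upto CARD('d) (\<lambda>k. u k t)"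
    and spans: "\<And>t k. t \<in> {0..<e} \<Longrightarrow> k \<le> CARD('d) \<Longrightarrow>
       span ((\<lambda>i. u i t) ` {..<k}) = span ((\<lambda>i. F i t) ` {..<k})"
    by blast
  have P1: "real_analytic_on {0..<e} (\<lambda>t. P t 1)"
    using assms(1,3) nondegenerate_imp_le \<open>e \<le> \<epsilon>0\<close> by (force intro: real_analytic_on_subset)
  have span: "P t i - P t 1 \<in> span ((\<lambda>k. u k t) ` {..<i - 1})"
    if "t \<in> {0..<e}" "2 \<le> i" "i \<le> l + 1" for t i
  proof -
    have "F (i - 2) t \<in> span ((\<lambda>k. F k t) ` {..<i - 1})"
      using that by (intro span_base) auto
    then show ?thesis
      using spans[OF that(1), of "i - 1"] edges[OF that(2,3)] that(3) \<open>l \<le> CARD('d)\<close> by simp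
  qed
  show ?thesis
    using analytic_pinning_isometry[OF u P1 orth span] \<open>0 < e\<close> by blast
qed

end
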